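(* Under the three-receiver coding module below, in every slot the transmitted linear combination is innovative (i.e., not already known, so it increases the receiver's rank if received) to every receiver that has not decoded everything that the sender knows.
   Context: A sender broadcasts packets $\mathbf{p}_1,\mathbf{p}_2,\dots$ (indexed by arrival order, vectors over $\mathbb{F}_3$) to three receivers $1,2,3$ over a slotted erasure broadcast channel; each slot it transmits at most one linear combination of arrived packets, each receiver either receives it or suffers an erasure, and perfect feedback gives the sender every receiver's knowledge. The rank of a receiver is the dimension of the space of linear combinations it knows. Receiver $i$ has heard of a packet if it knows some linear combination involving that packet (with nonzero coefficient); $H_i$ is the set of packets it has heard of and $D_i$ the set it has decoded. "Oldest" means smallest index. Coding module: labels $L,N,D$ form a permutation of $\{1,2,3\}$; initially $L=1,N=2,D=3,m=0$. Each slot: let $U=\{\mathbf{p}_1,\dots,\mathbf{p}_m\}$ together with $\mathbf{p}_{m+1}$ if it has arrived, and set $S_1=D_N\cap D_D$, $S_2=D_N\cap(H_D\setminus D_D)$, $S_3=D_N\setminus H_D$, $S_4=D_D\setminus D_N$, $S_5=(H_D\setminus D_D)\setminus D_N$, $S_6=U\setminus(H_D\cup D_N)$. Transmit: Case 1 ($\mathbf{p}_{m+1}$ not arrived): if $S_2,S_4$ both nonempty send the sum of their oldest packets; else if $S_3,S_4$ both nonempty send the sum of their oldest packets; else send the oldest packet of the first nonempty set among $S_5,S_6,S_2,S_3,S_4$; if all are empty send nothing. Case 2 ($\mathbf{p}_{m+1}\in S_1$): send $\mathbf{p}_{m+1}$ plus whatever Case 1 would send. Case 3 ($\mathbf{p}_{m+1}\in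 S_2$): send $\mathbf{p}_{m+1}+c\mathbf{p}$ with $\mathbf{p}$ the oldest packet of the first nonempty set among $S_4,S_5,S_6$, where $c=1$ unless $\mathbf{p}\in S_5$, in which case $c\in\{1,2\}$ is chosen so that the combination is innovative to receiver $D$. Case 4 ($\mathbf{p}_{m+1}\in S_3$): send $\mathbf{p}_{m+1}+\mathbf{p}$, $\mathbf{p}$ the oldest packet of the first nonempty set among $S_4,S_5,S_6$. Case 5 ($\mathbf{p}_{m+1}\in S_4$): send $\mathbf{p}_{m+1}+\mathbf{p}$, $\mathbf{p}$ the oldest packet of the first nonempty set among $S_2,S_3,S_6$. (In Cases 3–5, if all listed sets are empty, $\mathbf{p}_{m+1}$ is sent alone.) Case 6 (otherwise): send $\mathbf{p}_{m+1}$. After feedback, update $H_i,D_i$, set $m$ to the maximum rank of the three receivers; among receivers that have decoded all of $\mathbf{p}_1,\dots,\mathbf{p}_m$, label the one with lowest index $L$ (if there is none, assign labels arbitrarily); of the other two receivers, if exactly one has nonempty unsolved set $H_i\setminus D_i$, label it $D$ and the other $N$; otherwise assign $D,N$ arbitrarily. *)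

theory Defs
  imports Complex_Main "HOL-Library.Function_Algebras"
begin

text \<open>Packets are identified with their indices 1, 2, 3, ... (arrival order).
A linear combination of packets is represented by its coefficient vector
(a function from packet indices to the field); coordinate 0 is unused.
Receivers are the natural numbers 1, 2, 3.\<close>

type_synonym 'f cvec = "nat \<Rightarrow> 'f"

definition cscale :: "'f::field \<Rightarrow> 'f cvec \<Rightarrow> 'f cvec" where
  "cscale c v = (\<lambda>j. c * v j)"

abbreviation kspan :: "'f::field cvec set \<Rightarrow> 'f cvec set" where
  "kspan \<equiv> Modules.module.span cscale"

definition rank :: "'f::field cvec set \<Rightarrow> nat" where
  "rank V = Vector_Spaces.vector_space.dim cscale V"

definition pkt :: "nat \<Rightarrow> 'f::field cvec" where
  "pkt j = (\<lambda>k. if k = j then 1 else 0)"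

definition decoded :: "'f::field cvec set \<Rightarrow> nat set" where
  "decoded V = {j. 0 < j \<and> pkt j \<in> V}"

definition heard :: "'f::field cvec set \<Rightarrow> nat set" where
  "heard V = {j. 0 < j \<and> (\<exists>v\<in>V. v j \<noteq> 0)}"

definition oldest :: "nat set \<Rightarrow> nat" where
  "oldest S = (LEAST j. j \<in> S)"

definition first_nonempty :: "nat set list \<Rightarrow> nat option" where
  "first_nonempty Ss = (case filter (\<lambda>S. S \<noteq> {}) Ss of [] \<Rightarrow> None | S # _ \<Rightarrow> Some (oldest S))"

definition setU :: "nat \<Rightarrow> nat \<Rightarrow> nat set" where
  "setU m a = {1..m} \<union> (if m + 1 \<le> a then {m + 1} else {})"

definition S1 :: "(nat \<Rightarrow> 'f::field cvec set) \<Rightarrow> nat \<Rightarrow> nat \<Rightarrow> nat set" where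
  "S1 K N D = decoded (K N) \<inter> decoded (K D)"
definition S2 :: "(nat \<Rightarrow> 'f::field cvec set) \<Rightarrow> nat \<Rightarrow> nat \<Rightarrow> nat set" where
  "S2 K N D = decoded (K N) \<inter> (heard (K D) - decoded (K D))"
definition S3 :: "(nat \<Rightarrow> 'f::field cvec set) \<Rightarrow> nat \<Rightarrow> nat \<Rightarrow> nat set" where
  "S3 K N D = decoded (K N) - heard (K D)"
definition S4 :: "(nat \<Rightarrow> 'f::field cvec set) \<Rightarrow> nat \<Rightarrow> nat \<Rightarrow> nat set" where
  "S4 K N D = decoded (K D) - decoded (K N)"
definition S5 :: "(nat \<Rightarrow> 'f::field cvec set) \<Rightarrow> nat \<Rightarrow> nat \<Rightarrow> nat set" where
  "S5 K N D = (heard (K D) - decoded (K D)) - decoded (K N)"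
definition S6 :: "(nat \<Rightarrow> 'f::field cvec set) \<Rightarrow> nat \<Rightarrow> nat \<Rightarrow> nat \<Rightarrow> nat \<Rightarrow> nat set" where
  "S6 K N D m a = setU m a - (heard (K D) \<union> decoded (K N))"

text \<open>Case 1 transmission (None = send nothing).\<close>
definition case1_send :: "(nat \<Rightarrow> 'f::field cvec set) \<Rightarrow> nat \<Rightarrow> nat \<Rightarrow> nat \<Rightarrow> nat \<Rightarrow> 'f cvec option" where
  "case1_send K N D m a =
     (if S2 K N D \<noteq> {} \<and> S4 K N D \<noteq> {} then Some (pkt (oldest (S2 K N D)) + pkt (oldest (S4 K N D)))
      else if S3 K N D \<noteq> {} \<and> S4 K N D \<noteq> {} then Some (pkt (oldest (S3 K N D)) + pkt (oldest (S4 K N D)))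
      else map_option pkt (first_nonempty [S5 K N D, S6 K N D m a, S2 K N D, S3 K N D, S4 K N D]))"

text \<open>Transmission of the coding module; c is the coefficient used in Case 3
  when the partner packet lies in S_5 (ignored otherwise).\<close>
definition send :: "(nat \<Rightarrow> 'f::field cvec set) \<Rightarrow> nat \<Rightarrow> nat \<Rightarrow> nat \<Rightarrow> nat \<Rightarrow> 'f \<Rightarrow> 'f cvec option" where
  "send K N D m a c =
     (if \<not> (m + 1 \<le> a) then case1_send K N D m a
      else if m + 1 \<in> S1 K N D then
        Some (case case1_send K N D m a of None \<Rightarrow> pkt (m + 1) | Some w \<Rightarrow> pkt (m + 1) + w)
      else if m + 1 \<in> S2 K N D then
        (case first_nonempty [S4 K N D, S5 K N D, S6 K N D m a] of
           None \<Rightarrow> Some (pkt (m + 1))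
         | Some p \<Rightarrow> Some (pkt (m + 1) + cscale (if p \<in> S5 K N D then c else 1) (pkt p)))
      else if m + 1 \<in> S3 K N D then
        (case first_nonempty [S4 K N D, S5 K N D, S6 K N D m a] of
           None \<Rightarrow> Some (pkt (m + 1))
         | Some p \<Rightarrow> Some (pkt (m + 1) + pkt p))
      else if m + 1 \<in> S4 K N D then
        (case first_nonempty [S2 K N D, S3 K N D, S6 K N D m a] of
           None \<Rightarrow> Some (pkt (m + 1))
         | Some p \<Rightarrow> Some (pkt (m + 1) + pkt p))
      else Some (pkt (m + 1)))"

definition innovative :: "'f::field cvec option \<Rightarrow> 'f cvec set \<Rightarrow> bool" where
  "innovative xo V \<longleftrightarrow> (\<exists>v. xo = Some v \<and> v \<notin> V)"

definition labels_ok :: "(nat \<Rightarrow> 'f::field cvec set) \<Rightarrow> nat \<Rightarrow> nat \<times> nat \<times> nat \<Rightarrow> bool" where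
  "labels_ok K m lab =
     (case lab of (L, N, D) \<Rightarrow>
        {L, N, D} = {1, 2, 3} \<and>
        (let C = {i \<in> {1, 2, 3}. {1..m} \<subseteq> decoded (K i)} in C \<noteq> {} \<longrightarrow> L = Min C) \<and>
        (let uns = (\<lambda>i. heard (K i) - decoded (K i) \<noteq> {}) in uns N \<noteq> uns D \<longrightarrow> uns D))"

text \<open>A run of the coding module: arr t = number of packets arrived by slot t,
  rcv t i = receiver i receives the slot-t transmission, K t i = space known by
  receiver i at the start of slot t, lab t = labels (L,N,D) in slot t,
  m t = value of m in slot t, x t = transmission in slot t.\<close>
definition coding_run ::
  "(nat \<Rightarrow> nat) \<Rightarrow> (nat \<Rightarrow> nat \<Rightarrow> bool) \<Rightarrow> (nat \<Rightarrow> nat \<Rightarrow> 'f::field cvec set) \<Rightarrow>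
   (nat \<Rightarrow> nat \<times> nat \<times> nat) \<Rightarrow> (nat \<Rightarrow> nat) \<Rightarrow> (nat \<Rightarrow> 'f cvec option) \<Rightarrow> bool" where
  "coding_run arr rcv K lab m x \<longleftrightarrow>
     mono arr \<and>
     (\<forall>i. K 0 i = kspan {}) \<and> lab 0 = (1, 2, 3) \<and> m 0 = 0 \<and>
     (\<forall>t. case lab t of (L, N, D) \<Rightarrow>
        (\<exists>c\<in>{1, 2}.
           ((\<exists>c'\<in>{1, 2}. innovative (send (K t) N D (m t) (arr t) c') (K t D))
              \<longrightarrow> innovative (send (K t) N D (m t) (arr t) c) (K t D)) \<and>
           x t = send (K t) N D (m t) (arr t) c)) \<and>
     (\<forall>t i. K (Suc t) i =
        (case x t of Some v \<Rightarrow> if rcv t i then kspan (insert v (K t i)) else K t i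
                   | None \<Rightarrow> K t i)) \<and>
     (\<forall>t. m (Suc t) = Max ((\<lambda>i. rank (K (Suc t) i)) ` {1, 2, 3})) \<and>
     (\<forall>t. labels_ok (K (Suc t)) (m (Suc t)) (lab (Suc t)))"

end

theory Submission
  imports Defs
begin

text \<open>The proof rests on an invariant of the module: every receiver knows only combinations
  of \<open>p\<^sub>1, \<dots>, p\<^sub>m\<^sub>+\<^sub>1\<close>; receiver \<open>L\<close> has decoded \<open>p\<^sub>1, \<dots>, p\<^sub>m\<close>;
  receiver \<open>N\<close> has decoded every packet it has heard of; and at most one packet is unsolved
  at \<open>D\<close> without being decoded at \<open>N\<close>.  Given the invariant, a case analysis of the
  module shows that the support of every transmission contains \<open>p\<^sub>m\<^sub>+\<^sub>1\<close> once it
  has arrived, which \<open>L\<close> has not heard of; contains a packet not decoded, hence not heard of,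
  by \<open>N\<close>; and either contains a packet \<open>D\<close> has not heard of or has a single coordinate
  not decoded by \<open>D\<close>.  A combination of either kind lies outside the receiver's space.  The
  exception is Case 3 with partner in \<open>S\<^sub>5\<close>: the combinations for \<open>c = 1\<close> and
  \<open>c = 2\<close> differ by a packet undecoded at \<open>D\<close>, so one of them is innovative.  Since
  receiving a combination creates unsolved packets only inside its support, the same case
  analysis shows that the invariant survives every slot.\<close>

interpretation cv: vector_space "cscale :: 'f::field \<Rightarrow> 'f cvec \<Rightarrow> 'f cvec"
  by unfold_locales (auto simp: cscale_def fun_eq_iff algebra_simps)

definition supp :: "'f::field cvec \<Rightarrow> nat set" where
  "supp v = {j. v j \<noteq> 0}"

definition supported_on :: "nat set \<Rightarrow> 'f::field cvec set" where
  "supported_on A = {v. supp v \<subseteq> A}"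

definition unsolved :: "'f::field cvec set \<Rightarrow> nat set" where
  "unsolved V = heard V - decoded V"

definition subsingleton :: "nat set \<Rightarrow> bool" where
  "subsingleton X \<longleftrightarrow> (\<forall>a\<in>X. \<forall>b\<in>X. a = b)"

lemma cscale_apply [simp]: "cscale c v j = c * v j"
  by (simp add: cscale_def)

lemma pkt_apply: "pkt i j = (if j = i then 1 else 0)"
  by (simp add: pkt_def)

lemma sum_cvec_apply: "(\<Sum>i\<in>A. (f i :: 'f::field cvec)) j = (\<Sum>i\<in>A. f i j)"
  by (induction A rule: infinite_finite_induct) auto

lemma mem_supported_on [simp]: "v \<in> supported_on A \<longleftrightarrow> supp v \<subseteq> A"
  by (simp add: supported_on_def)

lemma supp_pkt [simp]: "supp (pkt x :: 'f::field cvec) = {x}"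
  by (auto simp: supp_def pkt_apply)

lemma supp_pkt_add_pkt: "x \<noteq> y \<Longrightarrow> supp (pkt x + pkt y :: 'f::field cvec) = {x, y}"
  by (auto simp: supp_def pkt_apply)

lemma supp_pkt_add_scaled_pkt:
  "x \<noteq> y \<Longrightarrow> c \<noteq> 0 \<Longrightarrow> supp (pkt x + cscale c (pkt y) :: 'f::field cvec) = {x, y}"
  by (auto simp: supp_def pkt_apply)

lemma supp_pkt_add: "q \<notin> supp w \<Longrightarrow> supp (pkt q + w :: 'f::field cvec) = insert q (supp w)"
  by (auto simp: supp_def pkt_apply)

lemma subsingleton_mono: "X \<subseteq> Y \<Longrightarrow> subsingleton Y \<Longrightarrow> subsingleton X"
  by (auto simp: subsingleton_def)

lemma subsingleton_subset_singleton: "X \<subseteq> {s} \<Longrightarrow> subsingleton X"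
  by (auto simp: subsingleton_def)

lemma decoded_subset_heard: "decoded (V :: 'f::field cvec set) \<subseteq> heard V"
  by (auto simp: heard_def decoded_def pkt_apply intro!: bexI[where x="pkt _"])

lemma decoded_mono: "V \<subseteq> W \<Longrightarrow> decoded V \<subseteq> decoded W"
  by (auto simp: decoded_def)

lemma heard_subset_if_supported_on: "V \<subseteq> supported_on A \<Longrightarrow> heard V \<subseteq> A"
  by (fastforce simp: heard_def supp_def)

lemma not_mem_if_unheard: "j \<in> supp v \<Longrightarrow> 0 < j \<Longrightarrow> j \<notin> heard V \<Longrightarrow> v \<notin> V"
  by (auto simp: heard_def supp_def)

lemma supported_on_mono: "A \<subseteq> B \<Longrightarrow> supported_on A \<subseteq> supported_on B"
  by auto

lemma supp_add_subset: "supp (v + w :: 'f::field cvec) \<subseteq> supp v \<union> supp w"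
  by (auto simp: supp_def)

lemma supp_cscale_subset: "supp (cscale c v :: 'f::field cvec) \<subseteq> supp v"
  by (auto simp: supp_def)

lemma subspace_supported_on: "cv.subspace (supported_on A :: 'f::field cvec set)"
proof -
  have "supp (0 :: 'f cvec) = {}" by (simp add: supp_def)
  then show ?thesis
    unfolding cv.subspace_def supported_on_def using supp_add_subset supp_cscale_subset by blast
qed

lemma span_supported_on: "S \<subseteq> supported_on A \<Longrightarrow> cv.span S \<subseteq> supported_on A"
  by (rule cv.span_minimal[OF _ subspace_supported_on])

lemma cvec_expansion:
  assumes "finite A" "supp v \<subseteq> A"
  shows "v = (\<Sum>j\<in>A. cscale (v j) (pkt j))"
proof
  fix i
  have "(\<Sum>j\<in>A. cscale (v j) (pkt j)) i = (\<Sum>j\<in>A. (if i = j then v j else 0))"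
    by (auto simp: sum_cvec_apply pkt_apply intro!: sum.cong)
  also have "\<dots> = (if i \<in> A then v i else 0)"
    using assms(1) by (simp add: sum.delta)
  also have "\<dots> = v i" using assms(2) by (auto simp: supp_def)
  finally show "v i = (\<Sum>j\<in>A. cscale (v j) (pkt j)) i" by simp
qed

lemma supported_on_subset_span_pkt:
  "finite A \<Longrightarrow> supported_on A \<subseteq> cv.span (pkt ` A :: 'f::field cvec set)"
proof
  fix v :: "'f cvec" assume "finite A" "v \<in> supported_on A"
  then have "v = (\<Sum>j\<in>A. cscale (v j) (pkt j))" by (simp add: cvec_expansion)
  also have "\<dots> \<in> cv.span (pkt ` A)"
    by (intro cv.span_sum cv.span_scale cv.span_base) auto
  finally show "v \<in> cv.span (pkt ` A)" .
qed

lemma pkt_inj: "inj (pkt :: nat \<Rightarrow> 'f::field cvec)"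
  by (auto simp: inj_def pkt_def fun_eq_iff)

lemma card_pkt_image: "card (pkt ` A :: 'f::field cvec set) = card A"
  by (rule card_image[OF inj_on_subset[OF pkt_inj subset_UNIV]])

lemma independent_pkt_image: "cv.independent (pkt ` A :: 'f::field cvec set)"
  unfolding cv.dependent_def
proof
  assume "\<exists>a\<in>(pkt ` A :: 'f cvec set). a \<in> cv.span (pkt ` A - {a})"
  then obtain j where j: "j \<in> A" "pkt j \<in> cv.span (pkt ` A - {pkt j} :: 'f cvec set)"
    by blast
  have "pkt ` A - {pkt j} \<subseteq> (supported_on (A - {j}) :: 'f cvec set)"
    using pkt_inj by (auto dest: injD)
  then have "(pkt j :: 'f cvec) \<in> supported_on (A - {j})"
    using span_supported_on j(2) by blast
  then show False by simp
qed

lemma card_independent_le_dim: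
  assumes "B \<subseteq> V" "cv.independent B" "V \<subseteq> cv.span W" "finite W"
  shows "card B \<le> cv.dim (V :: 'f::field cvec set)"
proof -
  obtain A where A: "A \<subseteq> V" "cv.independent A" "V \<subseteq> cv.span A" "card A = cv.dim V"
    by (rule cv.basis_exists)
  have "finite A" using cv.independent_span_bound[OF assms(4) A(2)] A(1) assms(3) by auto
  then have "card B \<le> card A"
    using cv.independent_span_bound[OF _ assms(2)] assms(1) A(3) by auto
  then show ?thesis using A(4) by simp
qed

lemma dim_mono_in_finite_span:
  assumes "V \<subseteq> V'" "V' \<subseteq> cv.span W" "finite W"
  shows "cv.dim (V :: 'f::field cvec set) \<le> cv.dim V'"
proof -
  obtain A where A: "A \<subseteq> V" "cv.independent A" "V \<subseteq> cv.span A" "card A = cv.dim V"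
    by (rule cv.basis_exists)
  then show ?thesis using card_independent_le_dim[of A V' W] assms by auto
qed

lemma dim_supported_on_le:
  assumes "V \<subseteq> supported_on {1..n}"
  shows "cv.dim (V :: 'f::field cvec set) \<le> n"
proof -
  have "V \<subseteq> cv.span (pkt ` {1..n})"
    using assms supported_on_subset_span_pkt[of "{1..n}"] by auto
  then have "cv.dim V \<le> card (pkt ` {1..n} :: 'f cvec set)" by (intro cv.dim_le_card) auto
  then show ?thesis by (simp add: card_pkt_image)
qed

lemma le_dim_if_decoded:
  assumes "{1..n} \<subseteq> decoded V" "V \<subseteq> supported_on {1..M}"
  shows "n \<le> cv.dim (V :: 'f::field cvec set)"
proof -
  have "pkt ` {1..n} \<subseteq> V" using assms(1) by (auto simp: decoded_def)
  moreover have "V \<subseteq> cv.span (pkt ` {1..M})"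
    using assms(2) supported_on_subset_span_pkt[of "{1..M}"] by auto
  ultimately have "card (pkt ` {1..n} :: 'f cvec set) \<le> cv.dim V"
    by (intro card_independent_le_dim[OF _ independent_pkt_image]) auto
  then show ?thesis by (simp add: card_pkt_image)
qed

lemma decoded_if_full_dim:
  assumes sub: "cv.subspace V" and VS: "V \<subseteq> supported_on {1..n}"
    and d: "n \<le> cv.dim (V :: 'f::field cvec set)"
  shows "{1..n} \<subseteq> decoded V"
proof
  fix j assume j: "j \<in> {1..n}"
  show "j \<in> decoded V"
  proof (rule ccontr)
    assume "j \<notin> decoded V"
    then have pj: "pkt j \<notin> V" using j by (auto simp: decoded_def)
    obtain A where A: "A \<subseteq> V" "cv.independent A" "V \<subseteq> cv.span A" "card A = cv.dim V"
      by (rule cv.basis_exists)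
    have "cv.span A = V" using A sub cv.span_subspace by blast
    then have ind: "cv.independent (insert (pkt j) A)"
      using cv.independent_insertI[OF _ A(2)] pj by auto
    have "insert (pkt j) A \<subseteq> cv.span (pkt ` {1..n})"
      using A(1) VS supported_on_subset_span_pkt[of "{1..n}"] j by auto
    from cv.independent_span_bound[OF _ ind this]
    have "finite (insert (pkt j) A)"
      and "card (insert (pkt j) A) \<le> card (pkt ` {1..n} :: 'f cvec set)" by simp_all
    moreover have "pkt j \<notin> A" using A(1) pj by auto
    ultimately show False using A(4) d by (auto simp: card_pkt_image)
  qed
qed

text \<open>Subtracting the decoded coordinates of \<open>v\<close> isolates a multiple of \<open>p\<^sub>x\<close>.\<close>

lemma pkt_mem_if_others_decoded:
  assumes sub: "cv.subspace V" and v: "v \<in> V" and fin: "finite (supp v)"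
    and x: "x \<in> supp v" and dec: "supp v - {x} \<subseteq> decoded V"
  shows "pkt x \<in> (V :: 'f::field cvec set)"
proof -
  define r where "r = (\<Sum>j\<in>supp v - {x}. cscale (v j) (pkt j))"
  have "r \<in> V" unfolding r_def
  proof (rule cv.subspace_sum[OF sub])
    fix j assume "j \<in> supp v - {x}"
    then have "pkt j \<in> V" using dec by (auto simp: decoded_def)
    then show "cscale (v j) (pkt j) \<in> V" by (rule cv.subspace_scale[OF sub])
  qed
  then have "v - r \<in> V" using v by (rule cv.subspace_diff[OF sub, rotated])
  moreover have "v - r = cscale (v x) (pkt x)"
  proof
    fix i
    have "r i = (\<Sum>j\<in>supp v - {x}. (if i = j then v j else 0))"
      unfolding r_def
      by (auto simp: sum_cvec_apply pkt_apply intro!: sum.cong split: if_splits)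
    also have "\<dots> = (if i \<in> supp v - {x} then v i else 0)"
      using fin by (simp add: sum.delta)
    finally have ri: "r i = (if i \<in> supp v - {x} then v i else 0)" .
    show "(v - r) i = cscale (v x) (pkt x) i"
      using ri by (cases "i = x") (auto simp: pkt_apply supp_def)
  qed
  ultimately have "cscale (v x) (pkt x) \<in> V" by simp
  then have "cscale (inverse (v x)) (cscale (v x) (pkt x)) \<in> V"
    by (rule cv.subspace_scale[OF sub])
  moreover have "v x \<noteq> 0" using x by (simp add: supp_def)
  ultimately show ?thesis by simp
qed

lemma unsolved_empty_if_subsingleton:
  assumes sub: "cv.subspace V" and VS: "V \<subseteq> supported_on {1..n}"
    and u: "subsingleton (unsolved (V :: 'f::field cvec set))"
  shows "unsolved V = {}"
proof (rule ccontr)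
  assume "unsolved V \<noteq> {}"
  then obtain s where s: "s \<in> heard V" "s \<notin> decoded V" by (auto simp: unsolved_def)
  then obtain w where w: "w \<in> V" "w s \<noteq> 0" and s0: "0 < s" by (auto simp: heard_def)
  have wS: "supp w \<subseteq> {1..n}" using w(1) VS mem_supported_on by blast
  have "supp w - {s} \<subseteq> decoded V"
  proof
    fix j assume j: "j \<in> supp w - {s}"
    then have "j \<in> heard V" using w(1) wS by (auto simp: heard_def supp_def)
    then show "j \<in> decoded V" using u s j by (auto simp: unsolved_def subsingleton_def)
  qed
  then have "pkt s \<in> V"
    using pkt_mem_if_others_decoded[OF sub w(1) finite_subset[OF wS]] w(2) by (simp add: supp_def)
  then show False using s s0 by (simp add: decoded_def)
qed

lemma diff_subset_Suc_if_interval: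
  assumes "X \<subseteq> {1..n+1}" "{1..n} \<subseteq> Y"
  shows "X - Y \<subseteq> {n + 1 :: nat}"
proof
  fix y assume "y \<in> X - Y"
  then have "y \<in> {1..n+1}" "y \<notin> {1..n}" using assms by blast+
  then show "y \<in> {n + 1}" by auto
qed

lemma unsolved_empty_if_decoded_initial:
  assumes sub: "cv.subspace V" and VS: "V \<subseteq> supported_on {1..n+1}"
    and dec: "{1..n} \<subseteq> decoded (V :: 'f::field cvec set)"
  shows "unsolved V = {}"
proof (rule unsolved_empty_if_subsingleton[OF sub VS])
  have "unsolved V \<subseteq> {n + 1}"
    unfolding unsolved_def using heard_subset_if_supported_on[OF VS] dec
    by (rule diff_subset_Suc_if_interval)
  then show "subsingleton (unsolved V)" by (rule subsingleton_subset_singleton)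
qed

lemma span_insert_diff_mem:
  assumes "cv.subspace V" "w \<in> cv.span (insert v V)"
  obtains k where "w - cscale k v \<in> (V :: 'f::field cvec set)"
proof -
  have "cv.span V = V" using assms(1) by simp
  then show ?thesis using assms(2) cv.span_insert[of v V] that by blast
qed

lemma heard_span_insert:
  assumes "cv.subspace V"
  shows "heard (cv.span (insert v V)) \<subseteq> heard (V :: 'f::field cvec set) \<union> supp v"
proof
  fix j assume "j \<in> heard (cv.span (insert v V))"
  then obtain w where w: "w \<in> cv.span (insert v V)" "w j \<noteq> 0" and j: "0 < j"
    by (auto simp: heard_def)
  obtain k where k: "w - cscale k v \<in> V" using span_insert_diff_mem[OF assms w(1)] .
  show "j \<in> heard V \<union> supp v"
  proof (cases "v j = 0")
    case True
    then have "(w - cscale k v) j \<noteq> 0" using w(2) by simp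
    then show ?thesis using k j unfolding heard_def by blast
  qed (simp add: supp_def)
qed

lemma unsolved_span_insert:
  assumes "cv.subspace V"
  shows "unsolved (cv.span (insert v V)) \<subseteq> (heard V \<union> supp v) - decoded (V :: 'f::field cvec set)"
proof -
  have "decoded V \<subseteq> decoded (cv.span (insert v V))"
    by (rule decoded_mono) (meson cv.span_superset insert_subset subset_trans)
  then show ?thesis using heard_span_insert[OF assms, of v] by (auto simp: unsolved_def)
qed

lemma two_neq_zero_if_card_3:
  assumes "card (UNIV :: 'f::field set) = 3"
  shows "(2::'f) \<noteq> 0"
proof
  assume two: "(2::'f) = 0"
  have fin: "finite (UNIV :: 'f set)" using assms card.infinite by fastforce
  obtain b :: 'f where b: "b \<noteq> 0" "b \<noteq> 1"
  proof -
    have "\<not> (UNIV :: 'f set) \<subseteq> {0, 1}"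
    proof
      assume "(UNIV :: 'f set) \<subseteq> {0, 1}"
      then have "card (UNIV :: 'f set) \<le> card {0::'f, 1}" by (rule card_mono[rotated]) simp
      then show False using assms by (simp add: card_insert_if)
    qed
    then show ?thesis using that by blast
  qed
  have "(-1::'f) = 1" using two by (simp add: one_add_one neg_eq_iff_add_eq_0)
  then have "b + 1 \<noteq> 0" using b(2) by (metis eq_neg_iff_add_eq_0)
  moreover have "b + 1 \<noteq> 1" "b + 1 \<noteq> b" using b by simp_all
  ultimately have "card {0::'f, 1, b, b + 1} = 4" using b by (simp add: card_insert_if)
  moreover have "card {0::'f, 1, b, b + 1} \<le> card (UNIV :: 'f set)" by (rule card_mono[OF fin]) simp
  ultimately show False using assms by simp
qed

lemmas S_defs = S1_def S2_def S3_def S4_def S5_def S6_def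

lemma oldest_in: "S \<noteq> {} \<Longrightarrow> oldest S \<in> S"
  unfolding oldest_def by (metis LeastI ex_in_conv)

lemma first_nonempty3_SomeD:
  "first_nonempty [A, B, C] = Some p \<Longrightarrow>
     p \<in> A \<or> (A = {} \<and> p \<in> B) \<or> (A = {} \<and> B = {} \<and> p \<in> C)"
  using oldest_in[of A] oldest_in[of B] oldest_in[of C]
  by (auto simp: first_nonempty_def split: if_splits)

lemma first_nonempty3_NoneD:
  "first_nonempty [A, B, C] = None \<Longrightarrow> A = {} \<and> B = {} \<and> C = {}"
  by (auto simp: first_nonempty_def split: if_splits list.splits)

lemma first_nonempty5_SomeD:
  "first_nonempty [A, B, C, E, F] = Some p \<Longrightarrow>
     (A \<noteq> {} \<and> p = oldest A) \<or> (A = {} \<and> B \<noteq> {} \<and> p = oldest B) \<or>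
     (A = {} \<and> B = {} \<and> C \<noteq> {} \<and> p = oldest C) \<or>
     (A = {} \<and> B = {} \<and> C = {} \<and> E \<noteq> {} \<and> p = oldest E) \<or>
     (A = {} \<and> B = {} \<and> C = {} \<and> E = {} \<and> F \<noteq> {} \<and> p = oldest F)"
  by (auto simp: first_nonempty_def split: if_splits)

lemma first_nonempty5_NoneD:
  "first_nonempty [A, B, C, E, F] = None \<Longrightarrow> A = {} \<and> B = {} \<and> C = {} \<and> E = {} \<and> F = {}"
  by (auto simp: first_nonempty_def split: if_splits list.splits)

lemma setU_eq:
  "m + 1 \<le> a \<Longrightarrow> setU m a = {1..m+1}" "\<not> m + 1 \<le> a \<Longrightarrow> setU m a = {1..m}"
  by (auto simp: setU_def)

lemma setU_subset: "setU m a \<subseteq> {1..m+1}"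
  by (auto simp: setU_def)

lemma setU_pos: "j \<in> setU m a \<Longrightarrow> 0 < j"
  by (auto simp: setU_def split: if_splits)

lemma finite_setU: "finite (setU m a)"
  by (simp add: setU_def)

lemma decoded_subset_if_S2_S3_empty:
  "S2 K N D = {} \<Longrightarrow> S3 K N D = {} \<Longrightarrow> decoded (K N) \<subseteq> decoded (K D)"
  by (auto simp: S_defs)

lemma case1_send_support:
  assumes "case1_send K N D m a = Some (w :: 'f::field cvec)"
  shows "(\<exists>x y. supp w = {x, y} \<and> x \<in> S2 K N D \<and> y \<in> S4 K N D) \<or>
         (\<exists>x y. supp w = {x, y} \<and> x \<in> S3 K N D \<and> y \<in> S4 K N D) \<or>
         (\<exists>x. supp w = {x} \<and> x \<in> S5 K N D) \<or>
         (\<exists>x. supp w = {x} \<and> x \<in> S6 K N D m a \<and> S5 K N D = {}) \<or>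
         (\<exists>x. supp w = {x} \<and> x \<in> S2 K N D \<and> S4 K N D = {} \<and> S5 K N D = {} \<and> S6 K N D m a = {}) \<or>
         (\<exists>x. supp w = {x} \<and> x \<in> S3 K N D \<and>
            S2 K N D = {} \<and> S4 K N D = {} \<and> S5 K N D = {} \<and> S6 K N D m a = {}) \<or>
         (\<exists>x. supp w = {x} \<and> x \<in> S4 K N D \<and>
            S2 K N D = {} \<and> S3 K N D = {} \<and> S5 K N D = {} \<and> S6 K N D m a = {})"
proof -
  have d24: "x \<in> S2 K N D \<Longrightarrow> y \<in> S4 K N D \<Longrightarrow> x \<noteq> y" for x y by (auto simp: S_defs)
  have d34: "x \<in> S3 K N D \<Longrightarrow> y \<in> S4 K N D \<Longrightarrow> x \<noteq> y" for x y by (auto simp: S_defs)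
  show ?thesis
  proof (cases "S2 K N D \<noteq> {} \<and> S4 K N D \<noteq> {}")
    case True
    then have "w = pkt (oldest (S2 K N D)) + pkt (oldest (S4 K N D))"
      using assms by (simp add: case1_send_def)
    then show ?thesis using True oldest_in d24 supp_pkt_add_pkt by metis
  next
    case no24: False
    show ?thesis
    proof (cases "S3 K N D \<noteq> {} \<and> S4 K N D \<noteq> {}")
      case True
      then have "w = pkt (oldest (S3 K N D)) + pkt (oldest (S4 K N D))"
        using assms no24 by (simp add: case1_send_def)
      then show ?thesis using True oldest_in d34 supp_pkt_add_pkt by metis
    next
      case no34: False
      have "map_option pkt (first_nonempty [S5 K N D, S6 K N D m a, S2 K N D, S3 K N D, S4 K N D]) = Some w"
        using assms unfolding case1_send_def by (simp only: if_not_P[OF no24] if_not_P[OF no34])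
      then obtain p where
        p: "first_nonempty [S5 K N D, S6 K N D m a, S2 K N D, S3 K N D, S4 K N D] = Some p"
        and "supp w = {p}"
        by auto
      note supp_w = this(2)
      from first_nonempty5_SomeD[OF p] show ?thesis
      proof (elim disjE conjE)
        assume "S5 K N D \<noteq> {}" "p = oldest (S5 K N D)"
        then show ?thesis using supp_w oldest_in[of "S5 K N D"] by blast
      next
        assume "S5 K N D = {}" "S6 K N D m a \<noteq> {}" "p = oldest (S6 K N D m a)"
        then show ?thesis using supp_w oldest_in[of "S6 K N D m a"] by blast
      next
        assume "S5 K N D = {}" "S6 K N D m a = {}" "S2 K N D \<noteq> {}" "p = oldest (S2 K N D)"
        moreover have "S4 K N D = {}" using no24 \<open>S2 K N D \<noteq> {}\<close> by blast
        ultimately show ?thesis using supp_w oldest_in[of "S2 K N D"] by blast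
      next
        assume "S5 K N D = {}" "S6 K N D m a = {}" "S2 K N D = {}" "S3 K N D \<noteq> {}"
          "p = oldest (S3 K N D)"
        moreover have "S4 K N D = {}" using no34 \<open>S3 K N D \<noteq> {}\<close> by blast
        ultimately show ?thesis using supp_w oldest_in[of "S3 K N D"] by blast
      next
        assume "S5 K N D = {}" "S6 K N D m a = {}" "S2 K N D = {}" "S3 K N D = {}"
          "S4 K N D \<noteq> {}" "p = oldest (S4 K N D)"
        then show ?thesis using supp_w oldest_in[of "S4 K N D"] by blast
      qed
    qed
  qed
qed

lemma case1_send_NoneD:
  assumes "case1_send K N D m a = (None :: 'f::field cvec option)"
  shows "S2 K N D = {} \<and> S3 K N D = {} \<and> S4 K N D = {} \<and> S5 K N D = {} \<and> S6 K N D m a = {}"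
  using assms first_nonempty5_NoneD by (auto simp: case1_send_def split: if_splits)

lemma send_NoneD:
  assumes "send K N D m a c = (None :: 'f::field cvec option)"
  shows "\<not> m + 1 \<le> a \<and>
    S2 K N D = {} \<and> S3 K N D = {} \<and> S4 K N D = {} \<and> S5 K N D = {} \<and> S6 K N D m a = {}"
proof -
  have "\<not> m + 1 \<le> a" using assms by (auto simp: send_def split: if_splits option.splits)
  then show ?thesis using assms case1_send_NoneD by (simp add: send_def)
qed

text \<open>The only situation in which the coefficient \<open>c\<close> matters.\<close>

definition case3_partner_in_S5 ::
  "(nat \<Rightarrow> 'f::field cvec set) \<Rightarrow> nat \<Rightarrow> nat \<Rightarrow> nat \<Rightarrow> nat \<Rightarrow> bool" where
  "case3_partner_in_S5 K N D m a \<longleftrightarrow>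
     m + 1 \<le> a \<and> m + 1 \<in> S2 K N D \<and> S4 K N D = {} \<and> S5 K N D \<noteq> {}"

text \<open>Case 5 with partner in \<open>S\<^sub>6\<close>: the only transmission that can leave \<open>N\<close> with two
  unsolved packets.\<close>

definition case5_pair :: "(nat \<Rightarrow> 'f::field cvec set) \<Rightarrow> nat \<Rightarrow> nat \<Rightarrow> nat \<Rightarrow> nat set \<Rightarrow> bool" where
  "case5_pair K N D m X \<longleftrightarrow> (\<exists>p. X = {m + 1, p} \<and> m + 1 \<in> decoded (K D) \<and>
      m + 1 \<notin> decoded (K N) \<and> p \<notin> heard (K D) \<and> p \<notin> decoded (K N) \<and> p \<noteq> m + 1 \<and>
      decoded (K N) \<subseteq> decoded (K D))"

lemma send_case3_partner_in_S5:
  assumes "case3_partner_in_S5 K N D m a"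
  obtains p where "p \<in> S5 K N D"
    and "\<And>c. send K N D m a c = Some (pkt (m + 1) + cscale c (pkt p) :: 'f::field cvec)"
proof -
  have ar: "m + 1 \<le> a" and q2: "m + 1 \<in> S2 K N D" and e4: "S4 K N D = {}"
    and n5: "S5 K N D \<noteq> {}"
    using assms by (auto simp: case3_partner_in_S5_def)
  have q1: "m + 1 \<notin> S1 K N D" using q2 by (auto simp: S_defs)
  define p where "p = oldest (S5 K N D)"
  have p: "p \<in> S5 K N D" using oldest_in[OF n5] by (simp add: p_def)
  have "first_nonempty [S4 K N D, S5 K N D, S6 K N D m a] = Some p"
    using e4 n5 by (simp add: first_nonempty_def p_def)
  then have "send K N D m a c = Some (pkt (m + 1) + cscale c (pkt p))" for c
    using ar q1 q2 p by (simp add: send_def)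
  with p show ?thesis by (rule that)
qed

text \<open>The second clause makes it innovative to \<open>L\<close>, the third to \<open>N\<close>, the fourth to \<open>D\<close>;
  the last two bound the unsolved packets of \<open>N\<close> and \<open>D\<close> after reception.\<close>

definition good_support ::
  "(nat \<Rightarrow> 'f::field cvec set) \<Rightarrow> nat \<Rightarrow> nat \<Rightarrow> nat \<Rightarrow> nat \<Rightarrow> nat set \<Rightarrow> bool" where
  "good_support K N D m a X \<longleftrightarrow>
     X \<subseteq> setU m a \<and>
     (m + 1 \<le> a \<longrightarrow> m + 1 \<in> X) \<and>
     ((\<exists>j\<in>X. j \<notin> decoded (K N)) \<or> setU m a \<subseteq> decoded (K N)) \<and>
     ((\<exists>j\<in>X. j \<notin> heard (K D)) \<or> (\<exists>x\<in>X. x \<notin> decoded (K D) \<and> X - {x} \<subseteq> decoded (K D)) \<or>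
        (decoded (K N) \<subseteq> decoded (K D) \<and> setU m a \<subseteq> heard (K D) \<union> decoded (K N)) \<or>
        case3_partner_in_S5 K N D m a) \<and>
     (subsingleton (X - decoded (K N)) \<or> case5_pair K N D m X) \<and>
     (X - decoded (K N) - decoded (K D) \<subseteq> S5 K N D \<or>
        (S5 K N D = {} \<and> subsingleton (X - decoded (K N) - decoded (K D))) \<or>
        (\<exists>x. X = {x}) \<or> case5_pair K N D m X)"

lemmas good_support_unfolds =
  good_support_def S_defs setU_def subsingleton_def case3_partner_in_S5_def case5_pair_def

lemma good_support_case1:
  assumes "\<not> m + 1 \<le> a"
    and "decoded (K N) \<subseteq> setU m a" "heard (K D) \<subseteq> setU m a"
    and s: "case1_send K N D m a = Some (w :: 'f::field cvec)"
  shows "good_support K N D m a (supp w)"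
  using case1_send_support[OF s] assms(1-3) decoded_subset_heard[of "K D"]
  by (elim disjE exE conjE) (auto simp: good_support_unfolds)

lemma good_support_case2:
  assumes ar: "m + 1 \<le> a" and q1: "m + 1 \<in> S1 K N D"
    and hN: "decoded (K N) \<subseteq> setU m a" and hD: "heard (K D) \<subseteq> setU m a"
    and s: "send K N D m a c = Some (v :: 'f::field cvec)"
  shows "good_support K N D m a (supp v)"
proof -
  note dh = decoded_subset_heard[of "K D"]
  have sv: "v = (case case1_send K N D m a of None \<Rightarrow> pkt (m + 1) | Some w \<Rightarrow> pkt (m + 1) + w)"
    using s ar q1 by (simp add: send_def)
  show ?thesis
  proof (cases "case1_send K N D m a")
    case None
    then show ?thesis using sv case1_send_NoneD[OF None] ar q1 hN hD dh
      by (auto simp: good_support_unfolds)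
  next
    case (Some w)
    have "m + 1 \<notin> supp w"
      using case1_send_support[OF Some] q1 dh by (auto simp: S_defs)
    then have "supp v = insert (m + 1) (supp w)" using sv Some supp_pkt_add by simp
    then show ?thesis
      using case1_send_support[OF Some] ar q1 hN hD dh
      by (elim disjE exE conjE) (auto simp: good_support_unfolds)
  qed
qed

lemma good_support_case3:
  assumes ar: "m + 1 \<le> a" and q1: "m + 1 \<notin> S1 K N D" and q2: "m + 1 \<in> S2 K N D"
    and c0: "c \<noteq> 0"
    and hN: "decoded (K N) \<subseteq> setU m a" and hD: "heard (K D) \<subseteq> setU m a"
    and s: "send K N D m a c = Some (v :: 'f::field cvec)"
  shows "good_support K N D m a (supp v)"
proof -
  note dh = decoded_subset_heard[of "K D"]
  have sv: "Some v = (case first_nonempty [S4 K N D, S5 K N D, S6 K N D m a] of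
           None \<Rightarrow> Some (pkt (m + 1))
         | Some p \<Rightarrow> Some (pkt (m + 1) + cscale (if p \<in> S5 K N D then c else 1) (pkt p)))"
    using s ar q1 q2 by (simp add: send_def)
  show ?thesis
  proof (cases "first_nonempty [S4 K N D, S5 K N D, S6 K N D m a]")
    case None
    then show ?thesis using sv first_nonempty3_NoneD[OF None] ar q1 q2 hN hD dh
      by (auto simp: good_support_unfolds)
  next
    case (Some p)
    have "p \<noteq> m + 1" using first_nonempty3_SomeD[OF Some] q2 by (auto simp: S_defs)
    then have "supp v = {m + 1, p}" using sv Some c0 by (simp add: supp_pkt_add_scaled_pkt)
    then show ?thesis
      using first_nonempty3_SomeD[OF Some] ar q1 q2 hN hD dh
      by (elim disjE conjE) (auto simp: good_support_unfolds)
  qed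
qed

lemma good_support_case4:
  assumes ar: "m + 1 \<le> a" and q1: "m + 1 \<notin> S1 K N D" and q2: "m + 1 \<notin> S2 K N D"
    and q3: "m + 1 \<in> S3 K N D"
    and hN: "decoded (K N) \<subseteq> setU m a" and hD: "heard (K D) \<subseteq> setU m a"
    and s: "send K N D m a c = Some (v :: 'f::field cvec)"
  shows "good_support K N D m a (supp v)"
proof -
  note dh = decoded_subset_heard[of "K D"]
  have sv: "Some v = (case first_nonempty [S4 K N D, S5 K N D, S6 K N D m a] of
           None \<Rightarrow> Some (pkt (m + 1))
         | Some p \<Rightarrow> Some (pkt (m + 1) + pkt p))"
    using s ar q1 q2 q3 by (simp add: send_def)
  show ?thesis
  proof (cases "first_nonempty [S4 K N D, S5 K N D, S6 K N D m a]")
    case None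
    then show ?thesis using sv first_nonempty3_NoneD[OF None] ar q1 q2 q3 hN hD dh
      by (auto simp: good_support_unfolds)
  next
    case (Some p)
    have "p \<noteq> m + 1" using first_nonempty3_SomeD[OF Some] q3 by (auto simp: S_defs)
    then have "supp v = {m + 1, p}" using sv Some by (simp add: supp_pkt_add_pkt)
    then show ?thesis
      using first_nonempty3_SomeD[OF Some] ar q1 q2 q3 hN hD dh
      by (elim disjE conjE) (auto simp: good_support_unfolds)
  qed
qed

lemma good_support_case5:
  assumes ar: "m + 1 \<le> a" and q1: "m + 1 \<notin> S1 K N D" and q2: "m + 1 \<notin> S2 K N D"
    and q3: "m + 1 \<notin> S3 K N D" and q4: "m + 1 \<in> S4 K N D"
    and hN: "decoded (K N) \<subseteq> setU m a" and hD: "heard (K D) \<subseteq> setU m a"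
    and s: "send K N D m a c = Some (v :: 'f::field cvec)"
  shows "good_support K N D m a (supp v)"
proof -
  note dh = decoded_subset_heard[of "K D"]
  have sv: "Some v = (case first_nonempty [S2 K N D, S3 K N D, S6 K N D m a] of
           None \<Rightarrow> Some (pkt (m + 1))
         | Some p \<Rightarrow> Some (pkt (m + 1) + pkt p))"
    using s ar q1 q2 q3 q4 by (simp add: send_def)
  show ?thesis
  proof (cases "first_nonempty [S2 K N D, S3 K N D, S6 K N D m a]")
    case None
    moreover have "decoded (K N) \<subseteq> decoded (K D)"
      using decoded_subset_if_S2_S3_empty first_nonempty3_NoneD[OF None] by blast
    ultimately show ?thesis using sv first_nonempty3_NoneD[OF None] ar q1 q2 q3 q4 hN hD dh
      by (auto simp: good_support_unfolds)
  next
    case (Some p)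
    have "p \<noteq> m + 1" using first_nonempty3_SomeD[OF Some] q4 dh by (auto simp: S_defs)
    then have "supp v = {m + 1, p}" using sv Some by (simp add: supp_pkt_add_pkt)
    then show ?thesis
      using first_nonempty3_SomeD[OF Some] ar q1 q2 q3 q4 hN hD dh
        decoded_subset_if_S2_S3_empty[of K N D]
      by (elim disjE conjE) (auto simp: good_support_unfolds)
  qed
qed

lemma good_support_case6:
  assumes ar: "m + 1 \<le> a" and q1: "m + 1 \<notin> S1 K N D" and q2: "m + 1 \<notin> S2 K N D"
    and q3: "m + 1 \<notin> S3 K N D" and q4: "m + 1 \<notin> S4 K N D"
    and s: "send K N D m a c = Some (v :: 'f::field cvec)"
  shows "good_support K N D m a (supp v)"
proof -
  have "v = pkt (m + 1)" using s ar q1 q2 q3 q4 by (simp add: send_def)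
  moreover have "m + 1 \<notin> decoded (K N)" using q1 q2 q3 by (auto simp: S_defs)
  moreover have "m + 1 \<notin> decoded (K D)" using q1 q4 by (auto simp: S_defs)
  moreover have "m + 1 \<in> setU m a" using ar by (simp add: setU_def)
  ultimately show ?thesis unfolding good_support_def subsingleton_def by auto
qed

lemma good_support_send:
  assumes "c \<noteq> 0"
    and "decoded (K N) \<subseteq> setU m a" "heard (K D) \<subseteq> setU m a"
    and s: "send K N D m a c = Some (v :: 'f::field cvec)"
  shows "good_support K N D m a (supp v)"
proof (cases "m + 1 \<le> a")
  case False
  then have "case1_send K N D m a = Some v" using s by (simp add: send_def)
  then show ?thesis using good_support_case1 False assms(2,3) by blast
next
  case True
  then show ?thesis
    using good_support_case2[OF True _ assms(2,3) s] good_support_case3[OF True _ _ assms]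
      good_support_case4[OF True _ _ _ assms(2,3) s] good_support_case5[OF True _ _ _ _ assms(2,3) s]
      good_support_case6[OF True _ _ _ _ s]
    by blast
qed

definition coding_inv ::
  "(nat \<Rightarrow> 'f::field cvec set) \<Rightarrow> nat \<times> nat \<times> nat \<Rightarrow> nat \<Rightarrow> nat \<Rightarrow> bool" where
  "coding_inv K lab m a \<longleftrightarrow> (case lab of (L, N, D) \<Rightarrow>
     {L, N, D} = {1, 2, 3} \<and>
     (\<forall>i\<in>{1, 2, 3}. cv.subspace (K i) \<and>
        K i \<subseteq> supported_on {1..m+1} \<and> K i \<subseteq> supported_on {1..a}) \<and>
     m = Max ((\<lambda>i. rank (K i)) ` {1, 2, 3}) \<and>
     {1..m} \<subseteq> decoded (K L) \<and> unsolved (K N) = {} \<and> subsingleton (S5 K N D))"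

lemma perm_of_123D:
  assumes "{L, N, D} = {1, 2, 3::nat}"
  shows "L \<in> {1,2,3}" "N \<in> {1,2,3}" "D \<in> {1,2,3}" "L \<noteq> N" "L \<noteq> D" "N \<noteq> D"
    and "\<And>i. i \<in> {1,2,3} \<Longrightarrow> i = L \<or> i = N \<or> i = D"
proof -
  have "1 \<in> {L, N, D}" "2 \<in> {L, N, D}" "3 \<in> {L, N, D}" by (simp_all only: assms) simp_all
  then have a: "1 = L \<or> 1 = N \<or> 1 = D" "2 = L \<or> 2 = N \<or> 2 = D" "3 = L \<or> 3 = N \<or> 3 = D"
    by (simp_all only: insert_iff empty_iff simp_thms)
  have "L \<in> {L, N, D}" "N \<in> {L, N, D}" "D \<in> {L, N, D}" by simp_all
  then show "L \<in> {1,2,3}" "N \<in> {1,2,3}" "D \<in> {1,2,3}" by (simp_all only: assms)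
  then have "L = 1 \<or> L = 2 \<or> L = 3" "N = 1 \<or> N = 2 \<or> N = 3" "D = 1 \<or> D = 2 \<or> D = 3"
    by (simp_all only: insert_iff empty_iff simp_thms)
  with a show "L \<noteq> N" "L \<noteq> D" "N \<noteq> D" by linarith+
  show "i = L \<or> i = N \<or> i = D" if "i \<in> {1, 2, 3}" for i
  proof -
    from that have "i \<in> {L, N, D}" by (simp only: assms)
    then show ?thesis by (simp only: insert_iff empty_iff simp_thms)
  qed
qed

lemma rank_le_Max:
  "i \<in> {1, 2, 3::nat} \<Longrightarrow> rank (K i) \<le> Max ((\<lambda>i. rank (K i)) ` {1, 2, 3})"
  by (intro Max_ge) auto

locale coding_slot =
  fixes K :: "nat \<Rightarrow> 'f::field cvec set" and L N D m a :: nat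
  assumes inv: "coding_inv K (L, N, D) m a"
begin

lemma labels_perm: "{L, N, D} = {1, 2, 3}"
  using inv by (simp add: coding_inv_def)

lemmas labels = perm_of_123D[OF labels_perm]

lemma known_subspace: "i \<in> {1,2,3} \<Longrightarrow> cv.subspace (K i)"
  and known_supported_Suc_m: "i \<in> {1,2,3} \<Longrightarrow> K i \<subseteq> supported_on {1..m+1}"
  and known_supported_arrived: "i \<in> {1,2,3} \<Longrightarrow> K i \<subseteq> supported_on {1..a}"
  using inv unfolding coding_inv_def prod.case by blast+

lemma m_eq_Max: "m = Max ((\<lambda>i. rank (K i)) ` {1, 2, 3})"
  and L_decoded: "{1..m} \<subseteq> decoded (K L)"
  and N_unsolved: "unsolved (K N) = {}"
  and S5_subsingleton: "subsingleton (S5 K N D)"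
  using inv unfolding coding_inv_def prod.case by blast+

lemma rank_le_m: "i \<in> {1,2,3} \<Longrightarrow> rank (K i) \<le> m"
  using rank_le_Max[of i K] by (simp only: m_eq_Max[symmetric])

lemma Suc_m_not_all_decoded:
  assumes i: "i \<in> {1,2,3}"
  shows "\<not> {1..m+1} \<subseteq> decoded (K i)"
proof
  assume "{1..m+1} \<subseteq> decoded (K i)"
  then have "m + 1 \<le> cv.dim (K i)" by (rule le_dim_if_decoded[OF _ known_supported_Suc_m[OF i]])
  then show False using rank_le_m[OF i] unfolding rank_def by linarith
qed

lemma m_le_a: "m \<le> a"
proof (cases "m = 0")
  case False
  then have "m \<in> heard (K L)" using L_decoded decoded_subset_heard by fastforce
  then show ?thesis using heard_subset_if_supported_on[OF known_supported_arrived[OF labels(1)]]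
    by auto
qed simp

lemma heard_subset_setU:
  assumes "i \<in> {1,2,3}"
  shows "heard (K i) \<subseteq> setU m a"
proof -
  have "heard (K i) \<subseteq> {1..m+1} \<inter> {1..a}"
    using heard_subset_if_supported_on[OF known_supported_Suc_m[OF assms]]
      heard_subset_if_supported_on[OF known_supported_arrived[OF assms]] by (rule Int_greatest)
  then show ?thesis using m_le_a by (auto simp: setU_def)
qed

lemma L_unsolved: "unsolved (K L) = {}"
  by (rule unsolved_empty_if_decoded_initial[OF known_subspace[OF labels(1)]
      known_supported_Suc_m[OF labels(1)] L_decoded])

lemma D_unsolved_if_decoded_N_subset:
  assumes "decoded (K N) \<subseteq> decoded (K D)"
  shows "unsolved (K D) = {}"
proof (rule unsolved_empty_if_subsingleton[OF known_subspace[OF labels(3)]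
      known_supported_Suc_m[OF labels(3)]])
  have "unsolved (K D) \<subseteq> S5 K N D" using assms by (auto simp: unsolved_def S_defs)
  then show "subsingleton (unsolved (K D))" using S5_subsingleton by (rule subsingleton_mono)
qed

lemma decoded_N_subset_setU: "decoded (K N) \<subseteq> setU m a"
  using heard_subset_setU[OF labels(2)] decoded_subset_heard by blast

lemma good_support_sent:
  "c \<noteq> 0 \<Longrightarrow> send K N D m a c = Some v \<Longrightarrow> good_support K N D m a (supp v)"
  by (rule good_support_send[OF _ decoded_N_subset_setU heard_subset_setU[OF labels(3)]])

lemma supp_sent_subset_setU:
  "c \<noteq> 0 \<Longrightarrow> send K N D m a c = Some v \<Longrightarrow> supp v \<subseteq> setU m a"
  using good_support_sent by (simp add: good_support_def)

lemma sent_not_mem_if_unheard: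
  assumes "c \<noteq> 0" "send K N D m a c = Some v" "j \<in> supp v" "j \<notin> heard V"
  shows "v \<notin> V"
  using assms supp_sent_subset_setU setU_pos not_mem_if_unheard by blast

lemma setU_not_decoded:
  assumes "i \<in> {1,2,3}" "\<not> {1..a} \<subseteq> decoded (K i)"
  shows "\<not> setU m a \<subseteq> decoded (K i)"
proof
  assume U: "setU m a \<subseteq> decoded (K i)"
  show False
  proof (cases "m + 1 \<le> a")
    case True
    then show False using U Suc_m_not_all_decoded[OF assms(1)] setU_eq(1) by metis
  next
    case False
    then have "{1..a} \<subseteq> setU m a" using setU_eq(2) by auto
    then show False using U assms(2) by blast
  qed
qed

lemma send_None_decoded:
  assumes "send K N D m a c = None" "i \<in> {1,2,3}"
  shows "setU m a \<subseteq> decoded (K i)"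
proof -
  note E = send_NoneD[OF assms(1)]
  have "setU m a \<subseteq> decoded (K L)" using E setU_eq(2) L_decoded by simp
  moreover have "setU m a \<subseteq> decoded (K N)"
    using E heard_subset_setU[OF labels(3)] by (auto simp: S_defs)
  moreover have "setU m a \<subseteq> decoded (K D)"
    using E decoded_subset_heard[of "K D"] unfolding S_defs by blast
  ultimately show ?thesis using labels(7)[OF assms(2)] by blast
qed

lemma sent_innovative_L:
  assumes "c \<noteq> 0" "send K N D m a c = Some v" "\<not> setU m a \<subseteq> decoded (K L)"
  shows "v \<notin> K L"
proof -
  have ar: "m + 1 \<le> a" using assms(3) L_decoded setU_eq(2) by (cases "m + 1 \<le> a") auto
  then have "m + 1 \<in> supp v" using good_support_sent[OF assms(1,2)] by (simp add: good_support_def)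
  moreover have "m + 1 \<notin> decoded (K L)"
    using L_decoded Suc_m_not_all_decoded[OF labels(1)] by (auto simp: le_Suc_eq)
  then have "m + 1 \<notin> heard (K L)" using L_unsolved by (auto simp: unsolved_def)
  ultimately show ?thesis using sent_not_mem_if_unheard[OF assms(1,2)] by blast
qed

lemma sent_innovative_N:
  assumes "c \<noteq> 0" "send K N D m a c = Some v" "\<not> setU m a \<subseteq> decoded (K N)"
  shows "v \<notin> K N"
proof -
  obtain j where "j \<in> supp v" "j \<notin> decoded (K N)"
    using good_support_sent[OF assms(1,2)] assms(3) by (auto simp: good_support_def)
  moreover from this have "j \<notin> heard (K N)" using N_unsolved by (auto simp: unsolved_def)
  ultimately show ?thesis using sent_not_mem_if_unheard[OF assms(1,2)] by blast
qed

lemma case3_partner_innovative: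
  assumes "case3_partner_in_S5 K N D m a"
  shows "\<exists>c\<in>{1, 2}. innovative (send K N D m a c) (K D)"
proof (rule ccontr)
  obtain p where p: "p \<in> S5 K N D"
    and sp: "\<And>c. send K N D m a c = Some (pkt (m + 1) + cscale c (pkt p))"
    using send_case3_partner_in_S5[OF assms] by blast
  assume "\<not> ?thesis"
  then have "pkt (m + 1) + cscale 1 (pkt p) \<in> K D" "pkt (m + 1) + cscale 2 (pkt p) \<in> K D"
    using sp by (auto simp: innovative_def)
  moreover have "(pkt (m + 1) + cscale 2 (pkt p)) - (pkt (m + 1) + cscale 1 (pkt p)) = pkt p"
    by (simp add: fun_eq_iff algebra_simps)
  ultimately have "pkt p \<in> K D" using cv.subspace_diff[OF known_subspace[OF labels(3)]] by metis
  moreover have "0 < p" using p by (auto simp: S_defs heard_def)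
  ultimately show False using p by (simp add: decoded_def S_defs)
qed

lemma send_innovative_D:
  assumes c0: "c \<noteq> 0"
    and choice: "(\<exists>c'\<in>{1, 2}. innovative (send K N D m a c') (K D)) \<longrightarrow>
      innovative (send K N D m a c) (K D)"
    and s: "send K N D m a c = Some v" and nd: "\<not> setU m a \<subseteq> decoded (K D)"
  shows "innovative (send K N D m a c) (K D)"
proof -
  from good_support_sent[OF c0 s]
  consider (unheard) j where "j \<in> supp v" "j \<notin> heard (K D)"
    | (one_undecoded) y where "y \<in> supp v" "y \<notin> decoded (K D)" "supp v - {y} \<subseteq> decoded (K D)"
    | (covered) "decoded (K N) \<subseteq> decoded (K D)" "setU m a \<subseteq> heard (K D) \<union> decoded (K N)"
    | (partner) "case3_partner_in_S5 K N D m a"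
    unfolding good_support_def by blast
  then show ?thesis
  proof cases
    case unheard
    then have "v \<notin> K D" using sent_not_mem_if_unheard[OF c0 s] by blast
    then show ?thesis using s by (simp add: innovative_def)
  next
    case one_undecoded
    have supp_v: "supp v \<subseteq> setU m a" by (rule supp_sent_subset_setU[OF c0 s])
    have "v \<notin> K D"
    proof
      assume "v \<in> K D"
      with one_undecoded have "pkt y \<in> K D"
        using pkt_mem_if_others_decoded[OF known_subspace[OF labels(3)]] finite_subset[OF supp_v finite_setU] by blast
      moreover have "0 < y" using one_undecoded(1) supp_v setU_pos by blast
      ultimately show False using one_undecoded(2) by (simp add: decoded_def)
    qed
    then show ?thesis using s by (simp add: innovative_def)
  next
    case covered
    then have "unsolved (K D) = {}" using D_unsolved_if_decoded_N_subset by blast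
    with covered have "setU m a \<subseteq> decoded (K D)" by (auto simp: unsolved_def)
    with nd show ?thesis by contradiction
  next
    case partner
    then have "\<exists>c'\<in>{1, 2}. innovative (send K N D m a c') (K D)"
      by (rule case3_partner_innovative)
    with choice show ?thesis by blast
  qed
qed

lemma send_innovative:
  assumes c0: "c \<noteq> 0"
    and choice: "(\<exists>c'\<in>{1, 2}. innovative (send K N D m a c') (K D)) \<longrightarrow>
      innovative (send K N D m a c) (K D)"
    and i: "i \<in> {1, 2, 3}" and nd: "\<not> {1..a} \<subseteq> decoded (K i)"
  shows "innovative (send K N D m a c) (K i)"
proof (cases "send K N D m a c")
  case None
  then show ?thesis using send_None_decoded[OF None i] setU_not_decoded[OF i nd] by blast
next
  case (Some v)
  have "\<not> setU m a \<subseteq> decoded (K i)" by (rule setU_not_decoded[OF i nd])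
  then show ?thesis
    using labels(7)[OF i] sent_innovative_L[OF c0 Some] sent_innovative_N[OF c0 Some]
      send_innovative_D[OF c0 choice Some]
    by (auto simp: innovative_def Some)
qed

end

locale coding_step = coding_slot K L N D m a
  for K :: "nat \<Rightarrow> 'f::field cvec set" and L N D m a +
  fixes c :: 'f and x :: "'f cvec option" and r :: "nat \<Rightarrow> bool"
    and K' :: "nat \<Rightarrow> 'f cvec set" and m' a' L' N' D' :: nat
  assumes c_nonzero: "c \<noteq> 0"
    and x_eq: "x = send K N D m a c"
    and K'_eq: "\<And>i. K' i =
      (case x of Some v \<Rightarrow> if r i then cv.span (insert v (K i)) else K i | None \<Rightarrow> K i)"
    and m'_eq: "m' = Max ((\<lambda>i. rank (K' i)) ` {1, 2, 3})"
    and new_labels_ok: "labels_ok K' m' (L', N', D')"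
    and a_le_a': "a \<le> a'"
begin

lemma sent_good_support: "x = Some v \<Longrightarrow> good_support K N D m a (supp v)"
  using good_support_sent[OF c_nonzero] x_eq by simp

lemma sent_supp_subset: "x = Some v \<Longrightarrow> supp v \<subseteq> setU m a"
  using sent_good_support by (simp add: good_support_def)

lemma sent_supported_on:
  assumes "x = Some v"
  shows "v \<in> supported_on {1..m+1}" "v \<in> supported_on {1..a'}"
proof -
  have "setU m a \<subseteq> {1..a'}" using m_le_a a_le_a' by (auto simp: setU_def)
  then show "v \<in> supported_on {1..m+1}" "v \<in> supported_on {1..a'}"
    using sent_supp_subset[OF assms] setU_subset[of m a] by auto
qed

lemma new_known_cases: "K' i = K i \<or> (\<exists>v. x = Some v \<and> r i \<and> K' i = cv.span (insert v (K i)))"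
  using K'_eq[of i] by (cases x) auto

lemma new_subspace: "i \<in> {1,2,3} \<Longrightarrow> cv.subspace (K' i)"
  using new_known_cases[of i] known_subspace by auto

lemma known_subset_new: "K i \<subseteq> K' i"
  using new_known_cases[of i] cv.span_superset by blast

lemma decoded_subset_new: "decoded (K i) \<subseteq> decoded (K' i)"
  by (rule decoded_mono[OF known_subset_new])

lemma new_supported_Suc_m: "i \<in> {1,2,3} \<Longrightarrow> K' i \<subseteq> supported_on {1..m+1}"
  using new_known_cases[of i] known_supported_Suc_m span_supported_on sent_supported_on(1)
  by (metis insert_subset)

lemma new_supported_arrived:
  assumes "i \<in> {1,2,3}"
  shows "K' i \<subseteq> supported_on {1..a'}"
proof -
  have "{1..a} \<subseteq> {1..a'}" using a_le_a' by auto
  then have "K i \<subseteq> supported_on {1..a'}"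
    using known_supported_arrived[OF assms] supported_on_mono by blast
  then show ?thesis
    using new_known_cases[of i] span_supported_on sent_supported_on(2) by (metis insert_subset)
qed

lemma new_unsolved_if_not_received:
  "\<not> (\<exists>v. x = Some v \<and> r i) \<Longrightarrow> unsolved (K' i) \<subseteq> unsolved (K i)"
  using new_known_cases[of i] by auto

lemma new_unsolved_if_received:
  "i \<in> {1,2,3} \<Longrightarrow> x = Some v \<Longrightarrow> r i \<Longrightarrow>
    unsolved (K' i) \<subseteq> (heard (K i) \<union> supp v) - decoded (K i)"
  using K'_eq[of i] unsolved_span_insert[OF known_subspace] by simp

lemma sent_mem_new: "x = Some v \<Longrightarrow> r i \<Longrightarrow> v \<in> K' i"
  using K'_eq[of i] cv.span_base[of v "insert v (K i)"] by simp

lemma rank_le_new_rank: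
  assumes "i \<in> {1,2,3}"
  shows "rank (K i) \<le> rank (K' i)"
proof -
  have "K' i \<subseteq> cv.span (pkt ` {1..m+1})"
    using new_supported_Suc_m[OF assms] supported_on_subset_span_pkt[of "{1..m+1}"] by blast
  from dim_mono_in_finite_span[OF known_subset_new this] show ?thesis by (simp add: rank_def)
qed

lemma m_le_new_m: "m \<le> m'"
proof -
  have "m \<in> (\<lambda>i. rank (K i)) ` {1, 2, 3}" unfolding m_eq_Max by (rule Max_in) auto
  then obtain j where j: "j \<in> {1,2,3}" "m = rank (K j)" by blast
  have "rank (K' j) \<le> m'" unfolding m'_eq by (rule rank_le_Max[OF j(1)])
  then show ?thesis using rank_le_new_rank[OF j(1)] j(2) by simp
qed

lemma new_m_le_Suc_m: "m' \<le> m + 1"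
  unfolding m'_eq rank_def using dim_supported_on_le[OF new_supported_Suc_m]
  by (intro Max.boundedI) auto

lemma new_supported_Suc_new_m: "i \<in> {1,2,3} \<Longrightarrow> K' i \<subseteq> supported_on {1..m'+1}"
  using new_supported_Suc_m supported_on_mono[of "{1..m+1}" "{1..m'+1}"] m_le_new_m by auto

lemma new_labels_perm: "{L', N', D'} = {1, 2, 3}"
  using new_labels_ok by (simp add: labels_ok_def)

lemmas new_labels = perm_of_123D[OF new_labels_perm]

text \<open>Some receiver has decoded \<open>p\<^sub>1, \<dots>, p\<^sub>m\<^sub>'\<close>: the old \<open>L\<close> if \<open>m\<close> is unchanged,
  otherwise a receiver that reached the full rank \<open>m + 1\<close>.\<close>

lemma new_L_decoded: "{1..m'} \<subseteq> decoded (K' L')"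
proof -
  define C where "C = {i \<in> {1, 2, 3}. {1..m'} \<subseteq> decoded (K' i)}"
  have "C \<noteq> {}"
  proof (cases "m' = m")
    case True
    then have "L \<in> C" using labels(1) L_decoded decoded_subset_new[of L] by (auto simp: C_def)
    then show ?thesis by blast
  next
    case False
    then have mm: "m' = m + 1" using m_le_new_m new_m_le_Suc_m by simp
    have "m' \<in> (\<lambda>i. rank (K' i)) ` {1, 2, 3}" unfolding m'_eq by (intro Max_in) auto
    then obtain j where j: "j \<in> {1,2,3}" "m' = rank (K' j)" by blast
    have "{1..m+1} \<subseteq> decoded (K' j)"
      using decoded_if_full_dim[OF new_subspace[OF j(1)] new_supported_Suc_m[OF j(1)]] j(2) mm
      by (simp add: rank_def)
    then have "j \<in> C" using j(1) mm by (auto simp: C_def)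
    then show ?thesis by blast
  qed
  moreover have "C \<noteq> {} \<longrightarrow> L' = Min C"
    using new_labels_ok by (simp add: labels_ok_def C_def Let_def)
  ultimately have "L' \<in> C" using Min_in[of C] by (auto simp: C_def)
  then show ?thesis by (simp add: C_def)
qed

definition pair_to_N :: bool where
  "pair_to_N \<longleftrightarrow> (\<exists>v. x = Some v \<and> case5_pair K N D m (supp v) \<and> r N)"

lemma L_unsolved_new: "unsolved (K' L) = {}"
  by (rule unsolved_empty_if_decoded_initial[OF new_subspace[OF labels(1)]
      new_supported_Suc_m[OF labels(1)] order_trans[OF L_decoded decoded_subset_new]])

lemma N_unsolved_new:
  assumes "\<not> pair_to_N"
  shows "unsolved (K' N) = {}"
proof (cases "\<exists>v. x = Some v \<and> r N")
  case False
  then show ?thesis using new_unsolved_if_not_received N_unsolved by blast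
next
  case True
  then obtain v where v: "x = Some v" "r N" by blast
  have "\<not> case5_pair K N D m (supp v)" using assms v unfolding pair_to_N_def by blast
  then have "subsingleton (supp v - decoded (K N))"
    using sent_good_support[OF v(1)] by (simp add: good_support_def)
  moreover have "heard (K N) \<subseteq> decoded (K N)" using N_unsolved by (auto simp: unsolved_def)
  then have "unsolved (K' N) \<subseteq> supp v - decoded (K N)"
    using new_unsolved_if_received[OF labels(2) v] by blast
  ultimately show ?thesis
    using unsolved_empty_if_subsingleton[OF new_subspace[OF labels(2)]
        new_supported_Suc_m[OF labels(2)]] subsingleton_mono by blast
qed

lemma D_unsolved_new_if_pair:
  assumes "x = Some v" "case5_pair K N D m (supp v)"
  shows "unsolved (K' D) = {}"
proof -
  obtain p where p: "supp v = {m + 1, p}" "m + 1 \<in> decoded (K D)"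
    "decoded (K N) \<subseteq> decoded (K D)"
    using assms(2) unfolding case5_pair_def by blast
  have uD: "unsolved (K D) = {}" using D_unsolved_if_decoded_N_subset p(3) .
  show ?thesis
  proof (cases "r D")
    case False
    then show ?thesis using new_unsolved_if_not_received[of D] uD assms(1) by blast
  next
    case True
    have "heard (K D) \<subseteq> decoded (K D)" using uD by (auto simp: unsolved_def)
    then have "unsolved (K' D) \<subseteq> {p}"
      using new_unsolved_if_received[OF labels(3) assms(1) True] p(1,2) by auto
    then show ?thesis
      using unsolved_empty_if_subsingleton[OF new_subspace[OF labels(3)]
          new_supported_Suc_m[OF labels(3)]] subsingleton_subset_singleton by blast
  qed
qed

lemma unsolved_new_cases:
  assumes "i \<in> {1,2,3}" "unsolved (K' i) \<noteq> {}"
  shows "i = D \<and> \<not> pair_to_N \<or> i = N \<and> pair_to_N"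
  using labels(7)[OF assms(1)] assms(2) L_unsolved_new N_unsolved_new D_unsolved_new_if_pair
  unfolding pair_to_N_def by blast

lemma D_unsolved_new_minus_L: "subsingleton (unsolved (K' D) - decoded (K' L))"
proof -
  have "unsolved (K' D) \<subseteq> {1..m+1}"
    using heard_subset_if_supported_on[OF new_supported_Suc_m[OF labels(3)]]
    by (auto simp: unsolved_def)
  moreover have "{1..m} \<subseteq> decoded (K' L)" using L_decoded decoded_subset_new[of L] by blast
  ultimately have "unsolved (K' D) - decoded (K' L) \<subseteq> {m + 1}"
    by (rule diff_subset_Suc_if_interval)
  then show ?thesis by (rule subsingleton_subset_singleton)
qed

lemma D_unsolved_new_minus_N: "subsingleton (unsolved (K' D) - decoded (K' N))"
proof (cases "\<exists>v. x = Some v \<and> r D")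
  case False
  have "unsolved (K' D) - decoded (K' N) \<subseteq> S5 K N D"
    using new_unsolved_if_not_received[OF False] decoded_subset_new[of N]
    by (auto simp: S_defs unsolved_def)
  then show ?thesis using S5_subsingleton by (rule subsingleton_mono)
next
  case True
  then obtain v where v: "x = Some v" "r D" by blast
  have supp_v: "supp v \<subseteq> setU m a" by (rule sent_supp_subset[OF v(1)])
  have base: "unsolved (K' D) - decoded (K' N) \<subseteq>
      S5 K N D \<union> ((supp v - decoded (K N) - decoded (K D)) - decoded (K' D))"
    using new_unsolved_if_received[OF labels(3) v] decoded_subset_new[of N]
    by (auto simp: S_defs unsolved_def)
  from sent_good_support[OF v(1)] consider
      (in_S5) "supp v - decoded (K N) - decoded (K D) \<subseteq> S5 K N D"
    | (S5_empty) "S5 K N D = {}" "subsingleton (supp v - decoded (K N) - decoded (K D))"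
    | (single) y where "supp v = {y}"
    | (pair) "case5_pair K N D m (supp v)"
    unfolding good_support_def by blast
  then show ?thesis
  proof cases
    case in_S5
    then show ?thesis using base S5_subsingleton subsingleton_mono[of _ "S5 K N D"] by blast
  next
    case S5_empty
    then show ?thesis using base subsingleton_mono by blast
  next
    case single
    then have "pkt y \<in> K' D"
      using pkt_mem_if_others_decoded[OF new_subspace[OF labels(3)] sent_mem_new[OF v]] by simp
    moreover have "0 < y" using supp_v single setU_pos by blast
    ultimately have "y \<in> decoded (K' D)" by (simp add: decoded_def)
    then have "unsolved (K' D) - decoded (K' N) \<subseteq> S5 K N D" using base single by auto
    then show ?thesis using S5_subsingleton by (rule subsingleton_mono)
  next
    case pair
    then show ?thesis using D_unsolved_new_if_pair[OF v(1)] by (simp add: subsingleton_def)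
  qed
qed

lemma N_unsolved_new_if_pair:
  assumes "pair_to_N"
  shows "subsingleton (unsolved (K' N) - decoded (K' L))"
    and "subsingleton (unsolved (K' N) - decoded (K' D))"
proof -
  obtain v where v: "x = Some v" "case5_pair K N D m (supp v)" "r N"
    using assms unfolding pair_to_N_def by blast
  obtain p where p: "supp v = {m + 1, p}" "m + 1 \<in> decoded (K D)" "p \<noteq> m + 1"
    using v(2) unfolding case5_pair_def by blast
  have "heard (K N) \<subseteq> decoded (K N)" using N_unsolved by (auto simp: unsolved_def)
  then have uN: "unsolved (K' N) \<subseteq> {m + 1, p}"
    using new_unsolved_if_received[OF labels(2) v(1,3)] p(1) by blast
  have "p \<in> setU m a" using sent_supp_subset[OF v(1)] p(1) by auto
  then have "p \<in> {1..m}" using p(3) setU_subset by fastforce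
  then have "p \<in> decoded (K' L)" using L_decoded decoded_subset_new[of L] by blast
  then show "subsingleton (unsolved (K' N) - decoded (K' L))"
    using uN by (intro subsingleton_subset_singleton[of _ "m + 1"]) auto
  have "m + 1 \<in> decoded (K' D)" using p(2) decoded_subset_new[of D] by blast
  then show "subsingleton (unsolved (K' N) - decoded (K' D))"
    using uN by (intro subsingleton_subset_singleton[of _ p]) auto
qed

lemma new_N_unsolved: "unsolved (K' N') = {}"
proof (rule ccontr)
  assume N'_uns: "unsolved (K' N') \<noteq> {}"
  have "unsolved (K' D') = {}"
  proof (rule ccontr)
    assume "unsolved (K' D') \<noteq> {}"
    then have "N' = D'"
      using unsolved_new_cases[OF new_labels(2) N'_uns] unsolved_new_cases[OF new_labels(3)] by blast
    then show False using new_labels(6) by simp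
  qed
  moreover have "(unsolved (K' N') \<noteq> {}) \<noteq> (unsolved (K' D') \<noteq> {}) \<longrightarrow> unsolved (K' D') \<noteq> {}"
    using new_labels_ok by (auto simp: labels_ok_def Let_def unsolved_def)
  ultimately show False using N'_uns by blast
qed

lemma new_S5_subsingleton: "subsingleton (S5 K' N' D')"
proof (cases "unsolved (K' D') = {}")
  case True
  then have "S5 K' N' D' = {}" unfolding S5_def unsolved_def by blast
  then show ?thesis by (simp add: subsingleton_def)
next
  case False
  have S5_eq: "S5 K' N' D' = unsolved (K' D') - decoded (K' N')"
    by (simp add: S5_def unsolved_def)
  have "N' = L \<or> N' = N \<or> N' = D" by (rule labels(7)[OF new_labels(2)])
  with unsolved_new_cases[OF new_labels(3) False] show ?thesis
    unfolding S5_eq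
    using new_labels(6) D_unsolved_new_minus_L D_unsolved_new_minus_N N_unsolved_new_if_pair
    by auto
qed

lemma coding_inv_new: "coding_inv K' (L', N', D') m' a'"
proof -
  have known: "\<forall>i\<in>{1, 2, 3}. cv.subspace (K' i) \<and>
      K' i \<subseteq> supported_on {1..m'+1} \<and> K' i \<subseteq> supported_on {1..a'}"
    by (intro ballI conjI new_subspace new_supported_Suc_new_m new_supported_arrived)
  show ?thesis
    unfolding coding_inv_def prod.case
    by (intro conjI new_labels_perm known m'_eq new_L_decoded new_N_unsolved new_S5_subsingleton)
qed

end

lemma coding_inv_Suc:
  assumes "coding_inv K (L, N, D) m a" "c \<noteq> 0" "x = send K N D m a c"
    and "\<And>i. K' i =
      (case x of Some v \<Rightarrow> if r i then cv.span (insert v (K i)) else K i | None \<Rightarrow> K i)"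
    and "m' = Max ((\<lambda>i. rank (K' i)) ` {1, 2, 3})" "labels_ok K' m' lab'" "a \<le> a'"
  shows "coding_inv K' lab' m' a'"
proof -
  obtain L' N' D' where lab': "lab' = (L', N', D')" by (cases lab')
  interpret coding_step K L N D m a c x r K' m' a' L' N' D'
    using assms by unfold_locales (simp_all add: lab')
  show ?thesis using coding_inv_new by (simp add: lab')
qed

lemma coding_inv_init:
  assumes "\<And>i. K i = cv.span ({} :: 'f::field cvec set)"
  shows "coding_inv K (1, 2, 3) 0 a"
proof -
  have K0: "K i = {0}" for i using assms by simp
  have "rank (K i) = 0" for i
    using cv.dim_span[of "{} :: 'f cvec set"] cv.dim_eq_card_independent[OF cv.independent_empty]
    by (simp add: rank_def K0)
  moreover have "heard (K i) = {}" for i by (simp add: K0 heard_def)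
  ultimately show ?thesis
    by (simp add: coding_inv_def K0 unsolved_def S5_def subsingleton_def supp_def)
qed

lemma coding_run_send:
  fixes K :: "nat \<Rightarrow> nat \<Rightarrow> 'f::field cvec set"
  assumes "coding_run arr rcv K lab m x" "lab t = (L, N, D)"
  obtains c where "c \<in> {1, 2}" "x t = send (K t) N D (m t) (arr t) c"
    and "(\<exists>c'\<in>{1, 2}. innovative (send (K t) N D (m t) (arr t) c') (K t D)) \<longrightarrow>
      innovative (send (K t) N D (m t) (arr t) c) (K t D)"
proof -
  from assms(1) have "\<forall>t. case lab t of (L, N, D) \<Rightarrow> \<exists>c\<in>{1, 2}.
      ((\<exists>c'\<in>{1, 2}. innovative (send (K t) N D (m t) (arr t) c') (K t D)) \<longrightarrow>
        innovative (send (K t) N D (m t) (arr t) c) (K t D)) \<and>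
      x t = send (K t) N D (m t) (arr t) c"
    unfolding coding_run_def by (elim conjE) assumption
  from spec[OF this, of t] assms(2) that show ?thesis by auto
qed

lemma coding_run_inv:
  assumes card3: "card (UNIV :: 'f::field set) = 3"
    and run: "coding_run arr rcv K lab m (x :: nat \<Rightarrow> 'f cvec option)"
  shows "coding_inv (K t) (lab t) (m t) (arr t)"
proof (induction t)
  case 0
  have "K 0 i = cv.span {}" for i using run by (simp add: coding_run_def)
  then have "coding_inv (K 0) (1, 2, 3) 0 (arr 0)" by (rule coding_inv_init)
  moreover have "lab 0 = (1, 2, 3)" "m 0 = 0" using run by (simp_all add: coding_run_def)
  ultimately show ?case by simp
next
  case (Suc t)
  obtain L N D where lab: "lab t = (L, N, D)" by (cases "lab t")
  obtain c where c: "c \<in> {1, 2}" "x t = send (K t) N D (m t) (arr t) c"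
    using coding_run_send[OF run lab] by blast
  have "c \<noteq> 0" using c(1) two_neq_zero_if_card_3[OF card3] by auto
  moreover have "arr t \<le> arr (Suc t)" using run by (simp add: coding_run_def mono_def)
  ultimately show ?case
    using run unfolding coding_run_def
    by (intro coding_inv_Suc[OF Suc[unfolded lab] _ c(2)]) blast+
qed

theorem theorem13:
  fixes arr :: "nat \<Rightarrow> nat" and rcv :: "nat \<Rightarrow> nat \<Rightarrow> bool"
    and K :: "nat \<Rightarrow> nat \<Rightarrow> 'f::field cvec set" and lab :: "nat \<Rightarrow> nat \<times> nat \<times> nat"
    and m :: "nat \<Rightarrow> nat" and x :: "nat \<Rightarrow> 'f cvec option"
    and t i :: nat
  assumes "card (UNIV :: 'f set) = 3"
    and "coding_run arr rcv K lab m x"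
    and "i \<in> {1, 2, 3}"
    and "\<not> {1..arr t} \<subseteq> decoded (K t i)"
  shows "innovative (x t) (K t i)"
proof -
  obtain L N D where lab: "lab t = (L, N, D)" by (cases "lab t")
  obtain c where c: "c \<in> {1, 2}" "x t = send (K t) N D (m t) (arr t) c"
    and choice: "(\<exists>c'\<in>{1, 2}. innovative (send (K t) N D (m t) (arr t) c') (K t D)) \<longrightarrow>
      innovative (send (K t) N D (m t) (arr t) c) (K t D)"
    using coding_run_send[OF assms(2) lab] by blast
  have "c \<noteq> 0" using c(1) two_neq_zero_if_card_3[OF assms(1)] by auto
  interpret coding_slot "K t" L N D "m t" "arr t"
    using coding_run_inv[OF assms(1,2), of t] lab by unfold_locales simp
  show ?thesis unfolding c(2) by (rule send_innovative[OF \<open>c \<noteq> 0\<close> choice assms(3,4)])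
qed

end
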